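(* Consider problem (VP) under the standing assumptions at $\bar x\in Q_0$. Let $\bar x$ be a local Geoffrion properly efficient solution of (VP), let $u\in\mathcal{C}(\bar x)$, and suppose $L^2(Q;\bar x,u)\subset T^2(Q_0;\bar x,u)$. Then there is no $v\in X$ such that $f_i^{\circ}(\bar x,v)+f_i^{\circ\circ}(\bar x,u)\leqq0$ for all $i\in I(\bar x;u)$, $f_i^{\circ}(\bar x,v)+f_i^{\circ\circ}(\bar x,u)<0$ for at least one $i\in I(\bar x;u)$, and $g_j^{\circ}(\bar x,v)+g_j^{\circ\circ}(\bar x,u)\leqq0$ for all $j\in J(\bar x;u)$.
   Context: Standing setting: $X$ is a Banach space; $I=\{1,\dots,p\}$, $J=\{1,\dots,m\}$; $f_i,g_j\colon X\to\mathbb{R}$; (VP) minimizes $f=(f_1,\dots,f_p)$ over $Q_0:=\{x\in X: g_j(x)\leqq 0,\ j\in J\}$. $J(\bar x):=\{j\in J: g_j(\bar x)=0\}$. Standing assumptions: $f_i$ ($i\in I$), $g_j$ ($j\in J(\bar x)$) locally Lipschitz at $\bar x$; $g_j$ ($j\notin J(\bar x)$) continuous at $\bar x$. $F^{\circ}(\bar x,u):=\limsup_{x\to\bar x,\,t\downarrow0}\frac{F(x+tu)-F(x)}{t}$; $F^{\circ\circ}(\bar x,u):=\limsup_{t\downarrow0}\frac{F(\bar x+tu)-F(\bar x)-tF^{\circ}(\bar x,u)}{\frac12t^2}$. $I(\bar x;u):=\{i\in I: f_i^{\circ}(\bar x,u)=0\}$, $J(\bar x;u):=\{j\in J(\bar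 x): g_j^{\circ}(\bar x,u)=0\}$. Lexicographic order on $\mathbb{R}^2$: $a\leqq_{\rm lex}b$ iff $a_1<b_1$ or ($a_1=b_1$, $a_2\leqq b_2$). $F_i^2(\bar x;u,v):=(f_i^{\circ}(\bar x,u),\, f_i^{\circ}(\bar x,v)+f_i^{\circ\circ}(\bar x,u))$, $G_j^2(\bar x;u,v):=(g_j^{\circ}(\bar x,u),\, g_j^{\circ}(\bar x,v)+g_j^{\circ\circ}(\bar x,u))$. $Q:=Q_0\cap\{x: f_i(x)\leqq f_i(\bar x),\ i\in I\}$; $L^2(Q;\bar x,u):=\{v: F_i^2(\bar x;u,v)\leqq_{\rm lex}(0,0)\ \forall i\in I,\ G_j^2(\bar x;u,v)\leqq_{\rm lex}(0,0)\ \forall j\in J(\bar x)\}$. $T^2(\Omega;\bar x,u):=\{v: \exists t_k\downarrow0,\ \exists v^k\to v,\ \bar x+t_ku+\frac12t_k^2v^k\in\Omega\ \forall k\}$. Critical direction: $u$ with $f_i^{\circ}(\bar x,u)\leqq0$ for all $i$, $=0$ for some $i$, and $g_j^{\circ}(\bar x,u)\leqq0$ for all $j\in J(\bar x)$; $\mathcal{C}(\bar x)$ is the set of these. Local Geoffrion properly efficient solution: there is a neighborhood $U$ of $\bar x$ such that (a) no $x\in U\cap Q_0$ has $f(x)\leqq f(\bar x)$ componentwise with $f(x)\ne f(\bar x)$, and (b) there is $M>0$ such that for every $i\in I$ and every $x\in U\cap Q_0$ with $f_i(x)<f_i(\bar x)$ there exists $j\in I$ with $f_j(x)>f_j(\bar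 x)$ and $\frac{f_i(\bar x)-f_i(x)}{f_j(x)-f_j(\bar x)}\leqq M$. *)

theory Defs
  imports "HOL-Analysis.Analysis"
begin

definition clarke_dd :: "('a::real_normed_vector \<Rightarrow> real) \<Rightarrow> 'a \<Rightarrow> 'a \<Rightarrow> ereal" where
  "clarke_dd F x u =
     Limsup (at (x, 0) within (UNIV \<times> {0<..}))
       (\<lambda>(y, t). ereal ((F (y + t *\<^sub>R u) - F y) / t))"

definition clarke_dd2 :: "('a::real_normed_vector \<Rightarrow> real) \<Rightarrow> 'a \<Rightarrow> 'a \<Rightarrow> ereal" where
  "clarke_dd2 F x u =
     Limsup (at_right 0)
       (\<lambda>t. (ereal (F (x + t *\<^sub>R u) - F x) - ereal t * clarke_dd F x u) / ereal (t\<^sup>2 / 2))"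

definition locally_lipschitz_at :: "('a::real_normed_vector \<Rightarrow> real) \<Rightarrow> 'a \<Rightarrow> bool" where
  "locally_lipschitz_at F x \<longleftrightarrow>
     (\<exists>\<delta>>0. \<exists>L. \<forall>y\<in>ball x \<delta>. \<forall>z\<in>ball x \<delta>. \<bar>F y - F z\<bar> \<le> L * norm (y - z))"

definition lex_le :: "ereal \<times> ereal \<Rightarrow> ereal \<times> ereal \<Rightarrow> bool" where
  "lex_le a b \<longleftrightarrow> fst a < fst b \<or> (fst a = fst b \<and> snd a \<le> snd b)"

definition feasible_set :: "nat \<Rightarrow> (nat \<Rightarrow> 'a \<Rightarrow> real) \<Rightarrow> 'a set" where
  "feasible_set m g = {x. \<forall>j\<in>{1..m}. g j x \<le> 0}"

definition active_set :: "nat \<Rightarrow> (nat \<Rightarrow> 'a \<Rightarrow> real) \<Rightarrow> 'a \<Rightarrow> nat set" where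
  "active_set m g xb = {j\<in>{1..m}. g j xb = 0}"

definition second_order_tangent_set :: "'a::real_normed_vector set \<Rightarrow> 'a \<Rightarrow> 'a \<Rightarrow> 'a set" where
  "second_order_tangent_set \<Omega> xb u =
     {v. \<exists>t vs. (\<forall>k. t k > 0) \<and> t \<longlonglongrightarrow> 0 \<and> vs \<longlonglongrightarrow> v \<and>
            (\<forall>k. xb + t k *\<^sub>R u + ((t k)\<^sup>2 / 2) *\<^sub>R vs k \<in> \<Omega>)}"

definition lin_cone2 :: "nat \<Rightarrow> nat \<Rightarrow> (nat \<Rightarrow> 'a::real_normed_vector \<Rightarrow> real) \<Rightarrow> (nat \<Rightarrow> 'a \<Rightarrow> real) \<Rightarrow> 'a \<Rightarrow> 'a \<Rightarrow> 'a set" where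
  "lin_cone2 p m f g xb u =
     {v. (\<forall>i\<in>{1..p}. lex_le (clarke_dd (f i) xb u, clarke_dd (f i) xb v + clarke_dd2 (f i) xb u) (0, 0))
       \<and> (\<forall>j\<in>active_set m g xb. lex_le (clarke_dd (g j) xb u, clarke_dd (g j) xb v + clarke_dd2 (g j) xb u) (0, 0))}"

definition critical_dirs :: "nat \<Rightarrow> nat \<Rightarrow> (nat \<Rightarrow> 'a::real_normed_vector \<Rightarrow> real) \<Rightarrow> (nat \<Rightarrow> 'a \<Rightarrow> real) \<Rightarrow> 'a \<Rightarrow> 'a set" where
  "critical_dirs p m f g xb =
     {u. (\<forall>i\<in>{1..p}. clarke_dd (f i) xb u \<le> 0) \<and> (\<exists>i\<in>{1..p}. clarke_dd (f i) xb u = 0)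
       \<and> (\<forall>j\<in>active_set m g xb. clarke_dd (g j) xb u \<le> 0)}"

definition local_geoffrion_proper :: "nat \<Rightarrow> nat \<Rightarrow> (nat \<Rightarrow> 'a::real_normed_vector \<Rightarrow> real) \<Rightarrow> (nat \<Rightarrow> 'a \<Rightarrow> real) \<Rightarrow> 'a \<Rightarrow> bool" where
  "local_geoffrion_proper p m f g xb \<longleftrightarrow>
     (\<exists>U. open U \<and> xb \<in> U \<and>
        \<not> (\<exists>x\<in>U \<inter> feasible_set m g. (\<forall>i\<in>{1..p}. f i x \<le> f i xb) \<and> (\<exists>i\<in>{1..p}. f i x \<noteq> f i xb)) \<and>
        (\<exists>M>0. \<forall>i\<in>{1..p}. \<forall>x\<in>U \<inter> feasible_set m g. f i x < f i xb \<longrightarrow>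
            (\<exists>j\<in>{1..p}. f j x > f j xb \<and> (f i xb - f i x) / (f j x - f j xb) \<le> M)))"

end

theory Submission
  imports Defs
begin

text \<open>Suppose some \<open>v\<close> satisfied the system. The critical direction \<open>u\<close> makes \<open>v\<close> an element of
  \<open>L\<^sup>2(Q; xb, u)\<close>, so by the constraint qualification there are feasible points
  \<open>x\<^sub>k = xb + t\<^sub>k u + t\<^sub>k\<^sup>2/2 v\<^sub>k\<close> with \<open>t\<^sub>k \<down> 0\<close>, \<open>v\<^sub>k \<rightarrow> v\<close>. Along them the objective with the strictly
  negative second-order value drops by at least \<open>c t\<^sub>k\<^sup>2/2\<close> for a fixed \<open>c > 0\<close>, while every other
  objective either decreases or grows by only \<open>o(t\<^sub>k\<^sup>2)\<close>. Hence the trade-off ratios in the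
  definition of Geoffrion proper efficiency are unbounded, a contradiction.\<close>

lemma locally_lipschitz_atE:
  fixes F :: "'a::real_normed_vector \<Rightarrow> real"
  assumes "locally_lipschitz_at F x"
  obtains L where "L \<ge> 0"
    "\<And>y z net. (y \<longlongrightarrow> x) net \<Longrightarrow> (z \<longlongrightarrow> x) net \<Longrightarrow>
       eventually (\<lambda>k. \<bar>F (y k) - F (z k)\<bar> \<le> L * norm (y k - z k)) net"
proof -
  obtain d L where d: "d > 0"
    and L: "\<forall>y\<in>ball x d. \<forall>z\<in>ball x d. \<bar>F y - F z\<bar> \<le> L * norm (y - z)"
    using assms unfolding locally_lipschitz_at_def by blast
  have bound: "\<bar>F y - F z\<bar> \<le> \<bar>L\<bar> * norm (y - z)" if "y \<in> ball x d" "z \<in> ball x d" for y z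
    using L that by (meson abs_ge_self mult_right_mono norm_ge_zero order_trans)
  show ?thesis
  proof (intro that[of "\<bar>L\<bar>"] abs_ge_zero)
    fix y z :: "_ \<Rightarrow> 'a" and net
    assume "(y \<longlongrightarrow> x) net" "(z \<longlongrightarrow> x) net"
    then have "eventually (\<lambda>k. y k \<in> ball x d) net" "eventually (\<lambda>k. z k \<in> ball x d) net"
      using tendstoD[OF _ d] by (simp_all add: dist_commute)
    then show "eventually (\<lambda>k. \<bar>F (y k) - F (z k)\<bar> \<le> \<bar>L\<bar> * norm (y k - z k)) net"
      by eventually_elim (rule bound)
  qed
qed

lemma clarke_dd_less_eventually:
  fixes F :: "'a::real_normed_vector \<Rightarrow> real"
  assumes "clarke_dd F x u < ereal c" and "y \<longlonglongrightarrow> x" and "s \<longlonglongrightarrow> 0" and "\<forall>k. s k > 0"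
  shows "eventually (\<lambda>k. F (y k + s k *\<^sub>R u) - F (y k) < c * s k) sequentially"
proof -
  have "filterlim (\<lambda>k. (y k, s k)) (at (x, 0) within (UNIV \<times> {0<..})) sequentially"
    using assms(2-4) unfolding filterlim_at
    by (auto intro!: tendsto_Pair always_eventually simp: less_imp_neq[symmetric])
  moreover have "eventually (\<lambda>p. (\<lambda>(z, t). ereal ((F (z + t *\<^sub>R u) - F z) / t)) p < ereal c)
      (at (x, 0) within (UNIV \<times> {0<..}))"
    using assms(1) unfolding clarke_dd_def by (rule Limsup_lessD)
  ultimately have "eventually (\<lambda>k. (F (y k + s k *\<^sub>R u) - F (y k)) / s k < c) sequentially"
    by (auto dest: filterlim_iff[THEN iffD1, rule_format])
  then show ?thesis
    by eventually_elim (use assms(4) in \<open>simp add: divide_less_eq\<close>)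
qed

lemma clarke_dd2_less_eventually:
  fixes F :: "'a::real_normed_vector \<Rightarrow> real"
  assumes "clarke_dd2 F x u < ereal c" and "clarke_dd F x u = 0"
    and "t \<longlonglongrightarrow> 0" and "\<forall>k. t k > 0"
  shows "eventually (\<lambda>k. F (x + t k *\<^sub>R u) - F x < c * ((t k)\<^sup>2 / 2)) sequentially"
proof -
  have "filterlim t (at_right 0) sequentially"
    using assms(3,4) by (intro tendsto_imp_filterlim_at_right) (auto intro!: always_eventually)
  moreover have "eventually (\<lambda>s. (ereal (F (x + s *\<^sub>R u) - F x) - ereal s * clarke_dd F x u)
      / ereal (s\<^sup>2 / 2) < ereal c) (at_right 0)"
    using assms(1) unfolding clarke_dd2_def by (rule Limsup_lessD)
  ultimately have "eventually (\<lambda>k. (ereal (F (x + t k *\<^sub>R u) - F x) - ereal (t k) * clarke_dd F x u)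
      / ereal ((t k)\<^sup>2 / 2) < ereal c) sequentially"
    by (auto dest: filterlim_iff[THEN iffD1, rule_format])
  then show ?thesis
  proof eventually_elim
    case (elim k)
    have "t k > 0" using assms(4) by auto
    with elim assms(2) show ?case by (simp add: divide_less_eq)
  qed
qed

lemma second_order_curve_tendsto:
  fixes x u :: "'a::real_normed_vector"
  assumes "t \<longlonglongrightarrow> 0" and "w \<longlonglongrightarrow> v"
  shows "(\<lambda>k. x + t k *\<^sub>R u + ((t k)\<^sup>2 / 2) *\<^sub>R w k) \<longlonglongrightarrow> x"
proof -
  have "(\<lambda>k. x + t k *\<^sub>R u + ((t k)\<^sup>2 / 2) *\<^sub>R w k) \<longlonglongrightarrow> x + 0 *\<^sub>R u + ((0::real)\<^sup>2 / 2) *\<^sub>R v"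
    by (intro tendsto_intros assms) auto
  then show ?thesis by simp
qed

lemma clarke_dd_neg_eventually_less:
  fixes F :: "'a::real_normed_vector \<Rightarrow> real"
  assumes lip: "locally_lipschitz_at F x" and neg: "clarke_dd F x u < 0"
    and tpos: "\<forall>k. t k > 0" and t0: "t \<longlonglongrightarrow> 0" and wv: "w \<longlonglongrightarrow> v"
  shows "eventually (\<lambda>k. F (x + t k *\<^sub>R u + ((t k)\<^sup>2 / 2) *\<^sub>R w k) < F x) sequentially"
proof -
  obtain c where c: "clarke_dd F x u < ereal c" "c < 0"
    using ereal_dense2[OF neg] by (auto simp: zero_ereal_def)
  obtain L where L: "L \<ge> 0" "\<And>y z. y \<longlonglongrightarrow> x \<Longrightarrow> z \<longlonglongrightarrow> x \<Longrightarrow>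
      eventually (\<lambda>k. \<bar>F (y k) - F (z k)\<bar> \<le> L * norm (y k - z k)) sequentially"
    using locally_lipschitz_atE[OF lip] by metis
  have curve: "(\<lambda>k. x + t k *\<^sub>R u + ((t k)\<^sup>2 / 2) *\<^sub>R w k) \<longlonglongrightarrow> x"
    using t0 wv by (rule second_order_curve_tendsto)
  have ray: "(\<lambda>k. x + t k *\<^sub>R u) \<longlonglongrightarrow> x"
    using second_order_curve_tendsto[OF t0 tendsto_const, of x u 0] by simp
  have "(\<lambda>k. L * t k * norm (w k) / 2) \<longlonglongrightarrow> L * 0 * norm v / 2"
    by (intro tendsto_intros t0 wv) auto
  then have "eventually (\<lambda>k. L * t k * norm (w k) / 2 < - c) sequentially"
    using c(2) by (auto elim: order_tendstoD(2))
  moreover note clarke_dd_less_eventually[OF c(1) tendsto_const t0 tpos]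
  moreover note L(2)[OF curve ray]
  ultimately show ?thesis
  proof eventually_elim
    case (elim k)
    have tk: "t k > 0" using tpos by auto
    have "F (x + t k *\<^sub>R u + ((t k)\<^sup>2 / 2) *\<^sub>R w k) - F (x + t k *\<^sub>R u)
        \<le> L * norm (((t k)\<^sup>2 / 2) *\<^sub>R w k)"
      using abs_le_D1[OF elim(3)] by simp
    also have "\<dots> = t k * (L * t k * norm (w k) / 2)"
      by (simp add: power2_eq_square)
    finally have "F (x + t k *\<^sub>R u + ((t k)\<^sup>2 / 2) *\<^sub>R w k) - F x < t k * (L * t k * norm (w k) / 2 + c)"
      using elim(2) by (simp add: algebra_simps)
    also have "\<dots> < 0" using elim(1) tk by (intro mult_pos_neg) auto
    finally show ?case by simp
  qed
qed

lemma ereal_add_less_ereal_split: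
  fixes a b :: ereal
  assumes "a + b < ereal r"
  obtains c1 c2 where "a < ereal c1" "b < ereal c2" "c1 + c2 < r"
proof (cases a; cases b)
  fix x y assume ab: "a = ereal x" "b = ereal y"
  then have "x + y < r" using assms by simp
  then show ?thesis using ab
    by (intro that[of "x + (r - x - y)/3" "y + (r - x - y)/3"]) (auto simp: field_simps)
next
  fix x assume "a = ereal x" "b = -\<infinity>"
  then show ?thesis by (intro that[of "x + 1" "r - x - 2"]) auto
next
  fix y assume "a = -\<infinity>" "b = ereal y"
  then show ?thesis by (intro that[of "r - y - 2" "y + 1"]) auto
next
  assume "a = -\<infinity>" "b = -\<infinity>"
  then show ?thesis by (intro that[of "r - 2" "1"]) auto
qed (use assms in auto)

lemma clarke_second_order_eventually_le:
  fixes F :: "'a::real_normed_vector \<Rightarrow> real"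
  assumes lip: "locally_lipschitz_at F x" and crit: "clarke_dd F x u = 0"
    and less: "clarke_dd F x v + clarke_dd2 F x u < ereal r"
    and tpos: "\<forall>k. t k > 0" and t0: "t \<longlonglongrightarrow> 0" and wv: "w \<longlonglongrightarrow> v"
  shows "eventually (\<lambda>k. F (x + t k *\<^sub>R u + ((t k)\<^sup>2 / 2) *\<^sub>R w k) - F x \<le> r * ((t k)\<^sup>2 / 2)) sequentially"
proof -
  obtain c1 c2 where c: "clarke_dd F x v < ereal c1" "clarke_dd2 F x u < ereal c2" "c1 + c2 < r"
    using ereal_add_less_ereal_split[OF less] by blast
  obtain L where L: "L \<ge> 0" "\<And>y z. y \<longlonglongrightarrow> x \<Longrightarrow> z \<longlonglongrightarrow> x \<Longrightarrow>
      eventually (\<lambda>k. \<bar>F (y k) - F (z k)\<bar> \<le> L * norm (y k - z k)) sequentially"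
    using locally_lipschitz_atE[OF lip] by metis
  let ?s = "\<lambda>k. (t k)\<^sup>2 / 2"
  have curve: "(\<lambda>k. x + t k *\<^sub>R u + ((t k)\<^sup>2 / 2) *\<^sub>R w k) \<longlonglongrightarrow> x"
    using t0 wv by (rule second_order_curve_tendsto)
  have ray: "(\<lambda>k. x + t k *\<^sub>R u) \<longlonglongrightarrow> x"
    using second_order_curve_tendsto[OF t0 tendsto_const, of x u 0] by simp
  have s0: "?s \<longlonglongrightarrow> 0"
    using tendsto_divide[OF tendsto_power[OF t0, of 2] tendsto_const, of 2] by simp
  have spos: "\<forall>k. ?s k > 0"
    using tpos by (simp add: less_imp_neq[symmetric])
  have curve_v: "(\<lambda>k. x + t k *\<^sub>R u + ?s k *\<^sub>R v) \<longlonglongrightarrow> x"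
    using t0 tendsto_const by (rule second_order_curve_tendsto)
  have "(\<lambda>k. L * norm (w k - v)) \<longlonglongrightarrow> L * norm (v - v)"
    by (intro tendsto_intros wv)
  then have "eventually (\<lambda>k. L * norm (w k - v) < r - c1 - c2) sequentially"
    using c(3) by (auto elim: order_tendstoD(2))
  \<comment> \<open>Telescope along \<open>x \<mapsto> x + t u \<mapsto> x + t u + s v \<mapsto> x + t u + s w\<close> with \<open>s = t\<^sup>2/2\<close>: the steps
    are bounded by the second-order derivative, by the Clarke quotient in direction \<open>v\<close> at the
    moving base point \<open>x + t u\<close>, and by the Lipschitz constant.\<close>
  moreover note clarke_dd_less_eventually[OF c(1) ray s0 spos]
  moreover note clarke_dd2_less_eventually[OF c(2) crit t0 tpos]
  moreover note L(2)[OF curve curve_v]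
  ultimately show ?thesis
  proof eventually_elim
    case (elim k)
    have s: "?s k > 0" using tpos[rule_format, of k] by simp
    have "x + t k *\<^sub>R u + ?s k *\<^sub>R w k - (x + t k *\<^sub>R u + ?s k *\<^sub>R v) = ?s k *\<^sub>R (w k - v)"
      by (simp add: algebra_simps)
    then have "F (x + t k *\<^sub>R u + ?s k *\<^sub>R w k) - F (x + t k *\<^sub>R u + ?s k *\<^sub>R v)
        \<le> L * norm (?s k *\<^sub>R (w k - v))"
      using elim(4) by (metis abs_le_D1)
    also have "\<dots> = ?s k * (L * norm (w k - v))"
      using s by simp
    also have "\<dots> \<le> ?s k * (r - c1 - c2)"
      using elim(1) s by (intro mult_left_mono) auto
    finally show ?case
      using elim(2,3) by (simp add: algebra_simps)
  qed
qed

lemma lex_le_zero_iff: "lex_le (a, b) (0, 0) \<longleftrightarrow> a < 0 \<or> a = 0 \<and> b \<le> 0"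
  by (simp add: lex_le_def)

lemma lin_cone2_critical_memberI:
  assumes "u \<in> critical_dirs p m f g xb"
    and "\<forall>i\<in>{1..p}. clarke_dd (f i) xb u = 0 \<longrightarrow> clarke_dd (f i) xb v + clarke_dd2 (f i) xb u \<le> 0"
    and "\<forall>j\<in>active_set m g xb. clarke_dd (g j) xb u = 0 \<longrightarrow> clarke_dd (g j) xb v + clarke_dd2 (g j) xb u \<le> 0"
  shows "v \<in> lin_cone2 p m f g xb u"
  using assms unfolding lin_cone2_def critical_dirs_def lex_le_zero_iff by (auto simp: le_less)

lemma lex_le_zero_eventually_le:
  fixes F :: "'a::real_normed_vector \<Rightarrow> real"
  assumes lip: "locally_lipschitz_at F x"
    and lex: "lex_le (clarke_dd F x u, clarke_dd F x v + clarke_dd2 F x u) (0, 0)"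
    and e: "e > 0" and tpos: "\<forall>k. t k > 0" and t0: "t \<longlonglongrightarrow> 0" and wv: "w \<longlonglongrightarrow> v"
  shows "eventually (\<lambda>k. F (x + t k *\<^sub>R u + ((t k)\<^sup>2 / 2) *\<^sub>R w k) - F x \<le> e * ((t k)\<^sup>2 / 2)) sequentially"
proof (cases "clarke_dd F x u < 0")
  case True
  from clarke_dd_neg_eventually_less[OF lip True tpos t0 wv] show ?thesis
  proof eventually_elim
    case (elim k)
    have "0 \<le> e * ((t k)\<^sup>2 / 2)" using e by simp
    with elim show ?case by linarith
  qed
next
  case False
  with lex have "clarke_dd F x u = 0" "clarke_dd F x v + clarke_dd2 F x u < ereal e"
    using e by (auto simp: lex_le_zero_iff intro: order.strict_trans1)
  then show ?thesis
    using clarke_second_order_eventually_le[OF lip _ _ tpos t0 wv] by blast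
qed

lemma local_geoffrion_proper_no_second_order_descent:
  assumes geof: "local_geoffrion_proper p m f g xb"
    and lim: "x \<longlonglongrightarrow> xb" and feas: "\<forall>k. x k \<in> feasible_set m g" and spos: "\<forall>k. s k > 0"
    and i0: "i0 \<in> {1..p}" and r: "r < 0"
    and descent: "eventually (\<lambda>k. f i0 (x k) - f i0 xb \<le> r * s k) sequentially"
    and small: "\<And>j e. j \<in> {1..p} \<Longrightarrow> e > 0 \<Longrightarrow>
       eventually (\<lambda>k. f j (x k) - f j xb \<le> e * s k) sequentially"
  shows False
proof -
  obtain U M where U: "open U" "xb \<in> U" and M: "M > 0"
    and trade: "\<forall>i\<in>{1..p}. \<forall>x\<in>U \<inter> feasible_set m g. f i x < f i xb \<longrightarrow>
            (\<exists>j\<in>{1..p}. f j x > f j xb \<and> (f i xb - f i x) / (f j x - f j xb) \<le> M)"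
    using geof unfolding local_geoffrion_proper_def by blast
  \<comment> \<open>The other objectives may grow by at most \<open>e s\<^sub>k\<close>, with \<open>e\<close> chosen so that the trade-off
    ratio with \<open>f i0\<close> exceeds \<open>M\<close>.\<close>
  define e where "e = - r / (2 * M)"
  have e: "e > 0" using r M by (simp add: e_def divide_neg_pos)
  have "eventually (\<lambda>k. x k \<in> U) sequentially"
    using lim U by (rule topological_tendstoD)
  moreover note descent
  moreover have "eventually (\<lambda>k. \<forall>j\<in>{1..p}. f j (x k) - f j xb \<le> e * s k) sequentially"
    using small e by (simp add: eventually_ball_finite)
  ultimately have "eventually (\<lambda>k. x k \<in> U \<and> f i0 (x k) - f i0 xb \<le> r * s k
      \<and> (\<forall>j\<in>{1..p}. f j (x k) - f j xb \<le> e * s k)) sequentially"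
    by eventually_elim blast
  then obtain N where "\<forall>k\<ge>N. x k \<in> U \<and> f i0 (x k) - f i0 xb \<le> r * s k
      \<and> (\<forall>j\<in>{1..p}. f j (x k) - f j xb \<le> e * s k)"
    unfolding eventually_sequentially by blast
  then have k: "x N \<in> U" "f i0 (x N) - f i0 xb \<le> r * s N"
    "\<forall>j\<in>{1..p}. f j (x N) - f j xb \<le> e * s N"
    by auto
  have rs: "r * s N < 0" using r spos by (simp add: mult_neg_pos)
  then have "f i0 (x N) < f i0 xb" using k(2) by linarith
  then obtain j where j: "j \<in> {1..p}" "f j (x N) > f j xb"
    "(f i0 xb - f i0 (x N)) / (f j (x N) - f j xb) \<le> M"
    using trade i0 k(1) feas by blast
  have "- r * s N \<le> f i0 xb - f i0 (x N)" using k(2) by linarith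
  also have "\<dots> \<le> M * (f j (x N) - f j xb)" using j(2,3) by (simp add: divide_le_eq)
  also have "\<dots> \<le> M * (e * s N)" using k(3) j(1) M by (intro mult_left_mono) auto
  also have "\<dots> = - r * s N / 2" using M by (simp add: e_def field_simps)
  finally show False using rs by linarith
qed

theorem corollary5p2:
  fixes p m :: nat
    and f g :: "nat \<Rightarrow> 'a::banach \<Rightarrow> real"
    and xb u :: 'a
  assumes "xb \<in> feasible_set m g"
    and lip_f: "\<forall>i\<in>{1..p}. locally_lipschitz_at (f i) xb"
    and "\<forall>j\<in>active_set m g xb. locally_lipschitz_at (g j) xb"
    and "\<forall>j\<in>{1..m} - active_set m g xb. isCont (g j) xb"
    and geof: "local_geoffrion_proper p m f g xb"
    and crit: "u \<in> critical_dirs p m f g xb"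
    and cq: "lin_cone2 p m f g xb u \<subseteq> second_order_tangent_set (feasible_set m g) xb u"
  shows "\<not> (\<exists>v. (\<forall>i\<in>{i\<in>{1..p}. clarke_dd (f i) xb u = 0}.
                   clarke_dd (f i) xb v + clarke_dd2 (f i) xb u \<le> 0)
              \<and> (\<exists>i\<in>{i\<in>{1..p}. clarke_dd (f i) xb u = 0}.
                   clarke_dd (f i) xb v + clarke_dd2 (f i) xb u < 0)
              \<and> (\<forall>j\<in>{j\<in>active_set m g xb. clarke_dd (g j) xb u = 0}.
                   clarke_dd (g j) xb v + clarke_dd2 (g j) xb u \<le> 0))"
    (is "\<not> (\<exists>v. ?system v)")
proof
  assume "\<exists>v. ?system v"
  then obtain v i0 where objectives: "\<forall>i\<in>{1..p}. clarke_dd (f i) xb u = 0 \<longrightarrow>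
        clarke_dd (f i) xb v + clarke_dd2 (f i) xb u \<le> 0"
    and constraints: "\<forall>j\<in>active_set m g xb. clarke_dd (g j) xb u = 0 \<longrightarrow>
        clarke_dd (g j) xb v + clarke_dd2 (g j) xb u \<le> 0"
    and i0: "i0 \<in> {1..p}" "clarke_dd (f i0) xb u = 0" "clarke_dd (f i0) xb v + clarke_dd2 (f i0) xb u < 0"
    by blast
  have v_lin: "v \<in> lin_cone2 p m f g xb u"
    using crit objectives constraints by (rule lin_cone2_critical_memberI)
  with cq obtain t w where tpos: "\<forall>k. t k > 0" and t0: "t \<longlonglongrightarrow> 0" and wv: "w \<longlonglongrightarrow> v"
    and xin: "\<forall>k. xb + t k *\<^sub>R u + ((t k)\<^sup>2 / 2) *\<^sub>R w k \<in> feasible_set m g"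
    unfolding second_order_tangent_set_def by blast
  obtain r where r: "clarke_dd (f i0) xb v + clarke_dd2 (f i0) xb u < ereal r" "r < 0"
    using ereal_dense2[OF i0(3)] by (auto simp: zero_ereal_def)
  show False
  proof (rule local_geoffrion_proper_no_second_order_descent
      [OF geof second_order_curve_tendsto[OF t0 wv] xin _ i0(1) r(2)])
    show "\<forall>k. (t k)\<^sup>2 / 2 > 0" using tpos by (simp add: less_imp_neq[symmetric])
    show "eventually (\<lambda>k. f i0 (xb + t k *\<^sub>R u + ((t k)\<^sup>2 / 2) *\<^sub>R w k) - f i0 xb
        \<le> r * ((t k)\<^sup>2 / 2)) sequentially"
      using clarke_second_order_eventually_le[OF _ i0(2) r(1) tpos t0 wv] lip_f i0(1) by blast
    fix j and e :: real assume "j \<in> {1..p}" "e > 0"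
    moreover have "lex_le (clarke_dd (f j) xb u, clarke_dd (f j) xb v + clarke_dd2 (f j) xb u) (0, 0)"
      using v_lin \<open>j \<in> {1..p}\<close> by (simp add: lin_cone2_def)
    ultimately show "eventually (\<lambda>k. f j (xb + t k *\<^sub>R u + ((t k)\<^sup>2 / 2) *\<^sub>R w k) - f j xb
        \<le> e * ((t k)\<^sup>2 / 2)) sequentially"
      using lex_le_zero_eventually_le[OF _ _ _ tpos t0 wv] lip_f by blast
  qed
qed

end
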